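(* Let $B$ be a real-valued standard Brownian motion with $B_0=0$. Let $n\ge1$, and let $a,r>0$ with $a\ge2^{n-1}$ and $a+r\le2^n$; set $Q(a,r)=[a,a+r)$. For $0\le\gamma<\tfrac12$, let $$\mathcal A(n,a,r,\gamma)=\{\exists\,t\in Q(a,r): |B_t|\le t^\gamma\}.$$ Then $$\mathbb P\big(\mathcal A(n,a,r,\gamma)\big)\le\frac{2}{\sqrt\pi}\,2^{n(\gamma-1/2)}+\frac{4}{\sqrt{2\pi}}\Big(\frac ra\Big)^{1/2}.$$ *)

theory Defs
  imports "HOL-Probability.Probability"
begin

definition standard_brownian_motion :: "'a measure \<Rightarrow> (real \<Rightarrow> 'a \<Rightarrow> real) \<Rightarrow> bool" where
  "standard_brownian_motion M B \<longleftrightarrow>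
     prob_space M \<and>
     (\<forall>t\<ge>0. B t \<in> borel_measurable M) \<and>
     (\<forall>\<omega>\<in>space M. B 0 \<omega> = 0) \<and>
     (\<forall>\<omega>\<in>space M. continuous_on {0..} (\<lambda>t. B t \<omega>)) \<and>
     (\<forall>s t. 0 \<le> s \<and> s < t \<longrightarrow>
        distributed M lborel (\<lambda>\<omega>. B t \<omega> - B s \<omega>) (normal_density 0 (sqrt (t - s)))) \<and>
     (\<forall>(ts :: nat \<Rightarrow> real) k. 0 \<le> ts 0 \<and> (\<forall>i<k. ts i < ts (Suc i)) \<longrightarrow>
        prob_space.indep_vars M (\<lambda>_. borel) (\<lambda>i \<omega>. B (ts (Suc i)) \<omega> - B (ts i) \<omega>) {..<k})"

end

theory Submission
  imports Defs
begin

(* Sample B on the dyadic grids a + k r / 2^m, k \<le> 2^m. By path continuity the event is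
   contained in the increasing union of the grid events for the band widened by any e > 0.
   On a grid, B (a + k r / 2^m) = B a + S k, where B a ~ N(0, a) is independent of the
   partial sums S k of centred independent increments of total variance r. Conditionally
   on B a = x, Kolmogorov's maximal inequality bounds the probability that x + S k ever
   enters [-c, c] by min (1, r / (|x| - c)^2); integrating this against the N(0, a)
   density, which is at most 1 / sqrt (2 pi a), gives (2 c + 4 sqrt r) / sqrt (2 pi a).
   For the theorem take c = 2^(n gamma) \<ge> t^gamma on [a, a + r) and use a \<ge> 2^(n-1). *)

lemma integrable_mult_of_square_integrable:
  fixes f g :: "'a \<Rightarrow> real"
  assumes "integrable M (\<lambda>x. (f x)^2)" "integrable M (\<lambda>x. (g x)^2)"
    and "f \<in> borel_measurable M" "g \<in> borel_measurable M"
  shows "integrable M (\<lambda>x. f x * g x)"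
proof (rule Bochner_Integration.integrable_bound)
  show "integrable M (\<lambda>x. (f x)^2 + (g x)^2)" "(\<lambda>x. f x * g x) \<in> borel_measurable M"
    using assms by auto
  have "\<bar>f x * g x\<bar> \<le> (f x)^2 + (g x)^2" for x
    using sum_squares_bound[of "\<bar>f x\<bar>" "\<bar>g x\<bar>"] zero_le_mult_iff[of "\<bar>f x\<bar>" "\<bar>g x\<bar>"]
    unfolding abs_mult power2_abs by linarith
  then show "AE x in M. norm (f x * g x) \<le> norm ((f x)^2 + (g x)^2)"
    by simp
qed

lemma integrable_square_sum:
  fixes Y :: "'i \<Rightarrow> 'a \<Rightarrow> real"
  assumes "\<And>i. i \<in> I \<Longrightarrow> integrable M (\<lambda>x. (Y i x)^2)"
    and "\<And>i. i \<in> I \<Longrightarrow> Y i \<in> borel_measurable M"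
  shows "integrable M (\<lambda>x. (\<Sum>i\<in>I. Y i x)^2)"
proof -
  have "integrable M (\<lambda>x. \<Sum>i\<in>I. \<Sum>j\<in>I. Y i x * Y j x)"
    using assms by (intro Bochner_Integration.integrable_sum integrable_mult_of_square_integrable)
  then show ?thesis by (simp add: power2_eq_square sum_product)
qed

lemma (in prob_space) expectation_square_sum_indep:
  fixes Y :: "'i \<Rightarrow> 'a \<Rightarrow> real"
  assumes "finite I" and ind: "indep_vars (\<lambda>_. borel) Y I"
    and sq: "\<And>i. i \<in> I \<Longrightarrow> integrable M (\<lambda>\<omega>. (Y i \<omega>)^2)"
    and mean: "\<And>i. i \<in> I \<Longrightarrow> expectation (Y i) = 0"
  shows "expectation (\<lambda>\<omega>. (\<Sum>i\<in>I. Y i \<omega>)^2) = (\<Sum>i\<in>I. expectation (\<lambda>\<omega>. (Y i \<omega>)^2))"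
proof -
  have rv: "\<And>i. i \<in> I \<Longrightarrow> Y i \<in> borel_measurable M"
    using ind by (simp add: indep_vars_def)
  have int: "\<And>i. i \<in> I \<Longrightarrow> integrable M (Y i)"
    using square_integrable_imp_integrable[OF rv sq] .
  have cross: "expectation (\<lambda>\<omega>. Y i \<omega> * Y j \<omega>)
      = (if i = j then expectation (\<lambda>\<omega>. (Y i \<omega>)^2) else 0)" if "i \<in> I" "j \<in> I" for i j
  proof (cases "i = j")
    case False
    then have "expectation (\<lambda>\<omega>. \<Prod>l\<in>{i, j}. Y l \<omega>) = (\<Prod>l\<in>{i, j}. expectation (Y l))"
      using that by (intro indep_vars_lebesgue_integral indep_vars_subset[OF ind] int) auto
    then show ?thesis using False mean that by simp
  qed (simp add: power2_eq_square)
  have "expectation (\<lambda>\<omega>. (\<Sum>i\<in>I. Y i \<omega>)^2) = expectation (\<lambda>\<omega>. \<Sum>i\<in>I. \<Sum>j\<in>I. Y i \<omega> * Y j \<omega>)"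
    by (simp add: power2_eq_square sum_product)
  also have "\<dots> = (\<Sum>i\<in>I. \<Sum>j\<in>I. expectation (\<lambda>\<omega>. Y i \<omega> * Y j \<omega>))"
    using sq rv
    by (simp add: Bochner_Integration.integral_sum integrable_mult_of_square_integrable)
  also have "\<dots> = (\<Sum>i\<in>I. \<Sum>j\<in>I. if i = j then expectation (\<lambda>\<omega>. (Y i \<omega>)^2) else 0)"
    by (intro sum.cong refl) (simp add: cross)
  finally show ?thesis using \<open>finite I\<close> by simp
qed

definition first_passage :: "(nat \<Rightarrow> real) \<Rightarrow> real \<Rightarrow> nat \<Rightarrow> bool" where
  "first_passage y z k \<longleftrightarrow> z \<le> \<bar>\<Sum>i=1..k. y i\<bar> \<and> (\<forall>j<k. \<bar>\<Sum>i=1..j. y i\<bar> < z)"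

lemma first_passage_cong:
  assumes "\<And>i. i \<in> {1..k} \<Longrightarrow> y i = y' i"
  shows "first_passage y z k = first_passage y' z k"
proof -
  have "(\<Sum>i=1..j. y i) = (\<Sum>i=1..j. y' i)" if "j \<le> k" for j
    using that assms by (intro sum.cong) auto
  then show ?thesis unfolding first_passage_def by simp
qed

lemma first_passage_unique:
  assumes "first_passage y z k" "first_passage y z l"
  shows "k = l"
  using assms unfolding first_passage_def by (cases k l rule: linorder_cases) force+

lemma first_passage_exists:
  assumes "z \<le> \<bar>\<Sum>i=1..k. y i\<bar>"
  shows "\<exists>j\<le>k. first_passage y z j"
proof -
  define j where "j = (LEAST j. z \<le> \<bar>\<Sum>i=1..j. y i\<bar>)"
  have "z \<le> \<bar>\<Sum>i=1..j. y i\<bar>" "j \<le> k"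
    using assms unfolding j_def by (auto intro: LeastI Least_le)
  moreover have "\<bar>\<Sum>i=1..l. y i\<bar> < z" if "l < j" for l
    using not_less_Least[OF that[unfolded j_def]] by simp
  ultimately show ?thesis unfolding first_passage_def by blast
qed

lemma sum_first_passage_le_one:
  assumes "finite K"
  shows "(\<Sum>k\<in>K. of_bool (first_passage y z k)) \<le> (1::real)"
proof -
  have "card (K \<inter> {k. first_passage y z k}) \<le> Suc 0"
    unfolding card_le_Suc0_iff_eq[OF finite_Int[OF disjI1[OF assms]]]
    using first_passage_unique by blast
  then show ?thesis
    using assms by simp
qed

lemma measurable_first_passage[measurable]:
  assumes "\<And>i. i \<in> {1..k} \<Longrightarrow> Y i \<in> borel_measurable M"
  shows "Measurable.pred M (\<lambda>\<omega>. first_passage (\<lambda>i. Y i \<omega>) z k)"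
proof -
  have [measurable]: "(\<lambda>\<omega>. \<Sum>i=1..j. Y i \<omega>) \<in> borel_measurable M" if "j \<le> k" for j
    using that assms by (intro borel_measurable_sum) auto
  show ?thesis
    unfolding first_passage_def by measurable
qed

lemma (in prob_space) indep_var_first_passage_future:
  fixes Y :: "nat \<Rightarrow> 'a \<Rightarrow> real"
  assumes ind: "indep_vars (\<lambda>_. borel) Y {1..N}" and "k \<le> N"
  shows "indep_var
    borel (\<lambda>\<omega>. of_bool (first_passage (\<lambda>i. Y i \<omega>) z k) * (\<Sum>i=1..k. Y i \<omega>))
    borel (\<lambda>\<omega>. \<Sum>i=Suc k..N. Y i \<omega>)"
proof -
  have "first_passage (restrict (\<lambda>i. Y i \<omega>) {1..k}) z k = first_passage (\<lambda>i. Y i \<omega>) z k" for \<omega>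
    by (rule first_passage_cong) simp
  then have "(\<lambda>\<omega>. of_bool (first_passage (\<lambda>i. Y i \<omega>) z k) * (\<Sum>i=1..k. Y i \<omega>))
      = (\<lambda>v. of_bool (first_passage v z k) * (\<Sum>i=1..k. v i)) \<circ> (\<lambda>\<omega>. restrict (\<lambda>i. Y i \<omega>) {1..k})"
    by (simp add: fun_eq_iff)
  moreover have "(\<lambda>\<omega>. \<Sum>i=Suc k..N. Y i \<omega>)
      = (\<lambda>v. \<Sum>i=Suc k..N. v i) \<circ> (\<lambda>\<omega>. restrict (\<lambda>i. Y i \<omega>) {Suc k..N})"
    by (simp add: fun_eq_iff)
  ultimately show ?thesis
    using \<open>k \<le> N\<close>
    by (simp only:) (intro indep_var_compose[OF indep_var_restrict[OF ind]]
        measurable_first_passage[where Y="\<lambda>i v. v i"]; auto)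
qed

lemma (in prob_space) expectation_square_indep_centred_add_ge:
  fixes S R :: "'a \<Rightarrow> real"
  assumes indep: "indep_var borel (\<lambda>\<omega>. of_bool (P \<omega>) * S \<omega>) borel R" and "expectation R = 0"
    and [measurable]: "Measurable.pred M P" "S \<in> borel_measurable M" "R \<in> borel_measurable M"
    and S_sq: "integrable M (\<lambda>\<omega>. (S \<omega>)^2)" and R_sq: "integrable M (\<lambda>\<omega>. (R \<omega>)^2)"
  shows "expectation (\<lambda>\<omega>. (S \<omega>)^2 * of_bool (P \<omega>)) \<le> expectation (\<lambda>\<omega>. (S \<omega> + R \<omega>)^2 * of_bool (P \<omega>))"
proof -
  define f where "f = (\<lambda>\<omega>. of_bool (P \<omega>) * S \<omega>)"
  note indep = indep[folded f_def]
  have f_sq: "integrable M (\<lambda>\<omega>. (f \<omega>)^2)"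
    by (rule Bochner_Integration.integrable_bound[OF S_sq]) (auto simp: f_def)
  have f_int: "integrable M f"
    by (rule square_integrable_imp_integrable[OF _ f_sq]) (unfold f_def, measurable)
  have R_int: "integrable M R"
    by (rule square_integrable_imp_integrable[OF _ R_sq]) measurable
  have fR: "expectation (\<lambda>\<omega>. f \<omega> * R \<omega>) = 0" and fR_int: "integrable M (\<lambda>\<omega>. f \<omega> * R \<omega>)"
    using indep_var_lebesgue_integral[OF indep f_int R_int] indep_var_integrable[OF indep f_int R_int]
      \<open>expectation R = 0\<close>
    by (simp_all add: f_def)
  have RP_int: "integrable M (\<lambda>\<omega>. (R \<omega>)^2 * of_bool (P \<omega>))"
    by (rule Bochner_Integration.integrable_bound[OF R_sq]) auto
  have "(S \<omega> + R \<omega>)^2 * of_bool (P \<omega>) = (f \<omega>)^2 + 2 * (f \<omega> * R \<omega>) + (R \<omega>)^2 * of_bool (P \<omega>)" for \<omega>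
    by (simp add: f_def power2_eq_square algebra_simps)
  then have "expectation (\<lambda>\<omega>. (S \<omega> + R \<omega>)^2 * of_bool (P \<omega>))
      = expectation (\<lambda>\<omega>. (f \<omega>)^2) + expectation (\<lambda>\<omega>. (R \<omega>)^2 * of_bool (P \<omega>))"
    using f_sq fR_int RP_int fR by simp
  moreover have "(f \<omega>)^2 = (S \<omega>)^2 * of_bool (P \<omega>)" for \<omega>
    by (simp add: f_def power2_eq_square)
  ultimately show ?thesis
    by simp
qed

lemma (in prob_space) first_passage_second_moment:
  fixes Y :: "nat \<Rightarrow> 'a \<Rightarrow> real"
  assumes ind: "indep_vars (\<lambda>_. borel) Y {1..N}"
    and rv[measurable]: "\<And>i. Y i \<in> borel_measurable M"
    and sq: "\<And>i. i \<in> {1..N} \<Longrightarrow> integrable M (\<lambda>\<omega>. (Y i \<omega>)^2)"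
    and mean: "\<And>i. i \<in> {1..N} \<Longrightarrow> expectation (Y i) = 0"
    and "k \<le> N" and "0 \<le> z"
  shows "z^2 * prob {\<omega>\<in>space M. first_passage (\<lambda>i. Y i \<omega>) z k}
    \<le> expectation (\<lambda>\<omega>. (\<Sum>i=1..N. Y i \<omega>)^2 * of_bool (first_passage (\<lambda>i. Y i \<omega>) z k))"
proof -
  define P where "P \<omega> \<longleftrightarrow> first_passage (\<lambda>i. Y i \<omega>) z k" for \<omega>
  define S where "S \<omega> = (\<Sum>i=1..k. Y i \<omega>)" for \<omega>
  define R where "R \<omega> = (\<Sum>i=Suc k..N. Y i \<omega>)" for \<omega>
  have [measurable]: "Measurable.pred M P" "S \<in> borel_measurable M" "R \<in> borel_measurable M"
    unfolding P_def S_def R_def by measurable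
  have S_sq: "integrable M (\<lambda>\<omega>. (S \<omega>)^2)" and R_sq: "integrable M (\<lambda>\<omega>. (R \<omega>)^2)"
    unfolding S_def R_def using sq \<open>k \<le> N\<close> by (auto intro!: integrable_square_sum)
  have "expectation R = 0"
    unfolding R_def using sq mean
    by (simp add: Bochner_Integration.integral_sum square_integrable_imp_integrable)
  have "{1..N} = {1..k} \<union> {Suc k..N}"
    using \<open>k \<le> N\<close> by auto
  then have split: "(\<Sum>i=1..N. Y i \<omega>) = S \<omega> + R \<omega>" for \<omega>
    unfolding S_def R_def by (simp add: sum.union_disjoint ivl_disj_int)
  have "prob {\<omega>\<in>space M. P \<omega>} = expectation (indicator {\<omega>\<in>space M. P \<omega>})"
    by simp
  also have "\<dots> = expectation (\<lambda>\<omega>. of_bool (P \<omega>))"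
    by (intro Bochner_Integration.integral_cong) (auto simp: indicator_def)
  finally have "z^2 * prob {\<omega>\<in>space M. P \<omega>} = expectation (\<lambda>\<omega>. z^2 * of_bool (P \<omega>))"
    by simp
  also have "\<dots> \<le> expectation (\<lambda>\<omega>. (S \<omega>)^2 * of_bool (P \<omega>))"
  proof (rule integral_mono)
    show "z^2 * of_bool (P \<omega>) \<le> (S \<omega>)^2 * of_bool (P \<omega>)" for \<omega>
      using power_mono[of z "\<bar>S \<omega>\<bar>" 2] \<open>0 \<le> z\<close>
      by (auto simp: P_def S_def first_passage_def)
  qed (rule Bochner_Integration.integrable_bound[where f="\<lambda>_. z^2"] Bochner_Integration.integrable_bound[OF S_sq];
       simp)+
  also have "\<dots> \<le> expectation (\<lambda>\<omega>. (S \<omega> + R \<omega>)^2 * of_bool (P \<omega>))"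
    using indep_var_first_passage_future[where z=z, OF ind \<open>k \<le> N\<close>, folded P_def S_def R_def]
      \<open>expectation R = 0\<close> S_sq R_sq
    by (intro expectation_square_indep_centred_add_ge) simp_all
  finally show ?thesis
    unfolding P_def split .
qed

lemma (in prob_space) kolmogorov_maximal_inequality:
  fixes Y :: "nat \<Rightarrow> 'a \<Rightarrow> real"
  assumes ind: "indep_vars (\<lambda>_. borel) Y {1..N}"
    and rv[measurable]: "\<And>i. Y i \<in> borel_measurable M"
    and sq: "\<And>i. i \<in> {1..N} \<Longrightarrow> integrable M (\<lambda>\<omega>. (Y i \<omega>)^2)"
    and mean: "\<And>i. i \<in> {1..N} \<Longrightarrow> expectation (Y i) = 0"
    and "0 < z"
  shows "prob {\<omega>\<in>space M. \<exists>k\<le>N. z \<le> \<bar>\<Sum>i=1..k. Y i \<omega>\<bar>}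
    \<le> (\<Sum>i=1..N. expectation (\<lambda>\<omega>. (Y i \<omega>)^2)) / z^2"
proof -
  define P where "P k \<omega> \<longleftrightarrow> first_passage (\<lambda>i. Y i \<omega>) z k" for k \<omega>
  define S where "S \<omega> = (\<Sum>i=1..N. Y i \<omega>)" for \<omega>
  have [measurable]: "Measurable.pred M (P k)" "S \<in> borel_measurable M" for k
    unfolding P_def S_def by measurable
  have S_sq: "integrable M (\<lambda>\<omega>. (S \<omega>)^2)"
    unfolding S_def using sq by (auto intro!: integrable_square_sum)
  have SP_int: "integrable M (\<lambda>\<omega>. (S \<omega>)^2 * of_bool (P k \<omega>))" for k
    by (rule Bochner_Integration.integrable_bound[OF S_sq]) auto
  have disjoint: "(\<Sum>k\<le>N. (S \<omega>)^2 * of_bool (P k \<omega>)) \<le> (S \<omega>)^2" for \<omega>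
    unfolding sum_distrib_left[symmetric] P_def
    by (rule mult_left_le) (simp_all only: sum_first_passage_le_one finite_atMost zero_le_power2)
  have "{\<omega>\<in>space M. \<exists>k\<le>N. z \<le> \<bar>\<Sum>i=1..k. Y i \<omega>\<bar>} \<subseteq> (\<Union>k\<le>N. {\<omega>\<in>space M. P k \<omega>})"
  proof clarify
    fix \<omega> k assume "\<omega> \<in> space M" "k \<le> N" "z \<le> \<bar>\<Sum>i=1..k. Y i \<omega>\<bar>"
    moreover from this(3) obtain j where "j \<le> k" "P j \<omega>"
      unfolding P_def by (blast dest: first_passage_exists)
    ultimately show "\<omega> \<in> (\<Union>k\<le>N. {\<omega>\<in>space M. P k \<omega>})"
      by auto
  qed
  then have "prob {\<omega>\<in>space M. \<exists>k\<le>N. z \<le> \<bar>\<Sum>i=1..k. Y i \<omega>\<bar>}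
      \<le> (\<Sum>k\<le>N. prob {\<omega>\<in>space M. P k \<omega>})"
    by (intro order_trans[OF finite_measure_mono finite_measure_subadditive_finite]) auto
  also have "\<dots> \<le> (\<Sum>k\<le>N. expectation (\<lambda>\<omega>. (S \<omega>)^2 * of_bool (P k \<omega>))) / z^2"
    unfolding sum_divide_distrib using first_passage_second_moment[OF ind rv sq mean] \<open>0 < z\<close>
    by (intro sum_mono) (simp add: P_def S_def field_simps)
  also have "(\<Sum>k\<le>N. expectation (\<lambda>\<omega>. (S \<omega>)^2 * of_bool (P k \<omega>)))
      = expectation (\<lambda>\<omega>. \<Sum>k\<le>N. (S \<omega>)^2 * of_bool (P k \<omega>))"
    by (intro Bochner_Integration.integral_sum[symmetric] SP_int)
  also have "\<dots> \<le> expectation (\<lambda>\<omega>. (S \<omega>)^2)"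
    by (rule integral_mono[OF Bochner_Integration.integrable_sum[OF SP_int] S_sq disjoint])
  also have "\<dots> = (\<Sum>i=1..N. expectation (\<lambda>\<omega>. (Y i \<omega>)^2))"
    unfolding S_def by (rule expectation_square_sum_indep[OF finite_atLeastAtMost ind sq mean])
  finally show ?thesis using \<open>0 < z\<close> by (simp add: divide_right_mono)
qed

lemma nn_integral_inverse_square_tail:
  fixes c r :: real
  assumes "0 < r"
  shows "(\<integral>\<^sup>+x. ennreal (r / (x - c)^2) * indicator {c + sqrt r..} x \<partial>lborel) = ennreal (sqrt r)"
proof -
  have "(\<integral>\<^sup>+x. ennreal (r / (x - c)^2) * indicator {c + sqrt r..} x \<partial>lborel)
      = ennreal (0 - (- r / ((c + sqrt r) - c)))"
  proof (rule nn_integral_FTC_atLeast)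
    fix x assume "c + sqrt r \<le> x"
    moreover have "0 < sqrt r"
      using \<open>0 < r\<close> by simp
    ultimately have "x - c \<noteq> 0"
      by linarith
    then show "((\<lambda>x. - r / (x - c)) has_real_derivative r / (x - c)^2) (at x)"
      by (auto intro!: derivative_eq_intros simp: power2_eq_square field_simps)
    show "0 \<le> r / (x - c)^2"
      using \<open>0 < r\<close> by simp
  next
    have "filterlim (\<lambda>x::real. x - c) at_infinity at_top"
      by (intro filterlim_at_top_imp_at_infinity filterlim_tendsto_add_at_top[OF tendsto_const filterlim_ident, of "-c", simplified])
    then show "((\<lambda>x. - r / (x - c)) \<longlongrightarrow> 0) at_top"
      by (intro tendsto_divide_0[OF tendsto_const])
  qed simp
  also have "0 - (- r / ((c + sqrt r) - c)) = sqrt r"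
    using \<open>0 < r\<close> by (simp add: real_div_sqrt)
  finally show ?thesis .
qed

(* min (1, r / (|x| - c)^2), cut where both branches equal 1 *)
definition hitting_bound :: "real \<Rightarrow> real \<Rightarrow> real \<Rightarrow> real" where
  "hitting_bound c r x = (if \<bar>x\<bar> < c + sqrt r then 1 else r / (\<bar>x\<bar> - c)^2)"

lemma borel_measurable_hitting_bound[measurable]: "hitting_bound c r \<in> borel_measurable borel"
  unfolding hitting_bound_def by measurable

lemma nn_integral_hitting_bound:
  assumes "0 \<le> c" and "0 < r"
  shows "(\<integral>\<^sup>+x. ennreal (hitting_bound c r x) \<partial>lborel) = ennreal (2 * c + 4 * sqrt r)"
proof -
  define b where "b = c + sqrt r"
  have "0 < sqrt r" "0 < b"
    using assms by (auto simp: b_def add_nonneg_pos)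
  define t where "t x = ennreal (r / (x - c)^2) * indicator {b..} x" for x
  have [measurable]: "t \<in> borel_measurable borel"
    unfolding t_def by measurable
  have "ennreal (hitting_bound c r x) = indicator {-b<..<b} x + t x + t (-x)" for x
  proof -
    consider "\<bar>x\<bar> < b" | "b \<le> x" | "x \<le> - b"
      by linarith
    then show ?thesis
      using \<open>0 < b\<close> by cases (auto simp: hitting_bound_def t_def b_def indicator_def power2_commute)
  qed
  then have "(\<integral>\<^sup>+x. ennreal (hitting_bound c r x) \<partial>lborel)
      = (\<integral>\<^sup>+x. indicator {-b<..<b} x \<partial>lborel) + (\<integral>\<^sup>+x. t x \<partial>lborel) + (\<integral>\<^sup>+x. t (-x) \<partial>lborel)"
    by (simp add: nn_integral_add)
  also have "(\<integral>\<^sup>+x. t (-x) \<partial>lborel) = (\<integral>\<^sup>+x. t x \<partial>lborel)"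
    using nn_integral_real_affine[of t "-1" 0] by simp
  also have "(\<integral>\<^sup>+x. t x \<partial>lborel) = ennreal (sqrt r)"
    unfolding t_def b_def using \<open>0 < r\<close> by (rule nn_integral_inverse_square_tail)
  also have "(\<integral>\<^sup>+x. indicator {-b<..<b} x \<partial>lborel) = ennreal (2 * b)"
    using \<open>0 < b\<close> by simp
  finally show ?thesis
    using \<open>0 \<le> c\<close> \<open>0 < sqrt r\<close> by (simp add: b_def flip: ennreal_plus)
qed

lemma (in prob_space) prob_shifted_partial_sums_hit_le:
  fixes Z :: "nat \<Rightarrow> 'a \<Rightarrow> real"
  assumes ind: "indep_vars (\<lambda>_. borel) Z {1..N}"
    and rv: "\<And>i. Z i \<in> borel_measurable M"
    and sq: "\<And>i. i \<in> {1..N} \<Longrightarrow> integrable M (\<lambda>\<omega>. (Z i \<omega>)^2)"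
    and mean: "\<And>i. i \<in> {1..N} \<Longrightarrow> expectation (Z i) = 0"
    and var: "(\<Sum>i=1..N. expectation (\<lambda>\<omega>. (Z i \<omega>)^2)) \<le> r" and "0 < r"
  shows "prob {\<omega>\<in>space M. \<exists>k\<le>N. \<bar>x + (\<Sum>i=1..k. Z i \<omega>)\<bar> \<le> c} \<le> hitting_bound c r x"
proof (cases "\<bar>x\<bar> < c + sqrt r")
  case False
  define z where "z = \<bar>x\<bar> - c"
  have "0 < sqrt r"
    using \<open>0 < r\<close> by simp
  then have "0 < z"
    using False unfolding z_def by linarith
  have "{\<omega>\<in>space M. \<exists>k\<le>N. \<bar>x + (\<Sum>i=1..k. Z i \<omega>)\<bar> \<le> c}
      \<subseteq> {\<omega>\<in>space M. \<exists>k\<le>N. z \<le> \<bar>\<Sum>i=1..k. Z i \<omega>\<bar>}"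
  proof clarify
    fix \<omega> k assume "\<omega> \<in> space M" "k \<le> N" and hit: "\<bar>x + (\<Sum>i=1..k. Z i \<omega>)\<bar> \<le> c"
    have "z \<le> \<bar>\<Sum>i=1..k. Z i \<omega>\<bar>"
      using abs_triangle_ineq[of "x + (\<Sum>i=1..k. Z i \<omega>)" "- (\<Sum>i=1..k. Z i \<omega>)"] hit
      by (simp add: z_def)
    then show "\<exists>k\<le>N. z \<le> \<bar>\<Sum>i=1..k. Z i \<omega>\<bar>"
      using \<open>k \<le> N\<close> by blast
  qed
  then have "prob {\<omega>\<in>space M. \<exists>k\<le>N. \<bar>x + (\<Sum>i=1..k. Z i \<omega>)\<bar> \<le> c}
      \<le> prob {\<omega>\<in>space M. \<exists>k\<le>N. z \<le> \<bar>\<Sum>i=1..k. Z i \<omega>\<bar>}"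
    using rv by (intro finite_measure_mono) measurable
  also have "\<dots> \<le> (\<Sum>i=1..N. expectation (\<lambda>\<omega>. (Z i \<omega>)^2)) / z^2"
    by (rule kolmogorov_maximal_inequality[OF ind rv sq mean \<open>0 < z\<close>])
  also have "\<dots> \<le> r / z^2"
    using var by (simp add: divide_right_mono)
  finally show ?thesis
    using False by (simp add: hitting_bound_def z_def)
qed (simp add: hitting_bound_def)

lemma (in prob_space) emeasure_indep_pair_le:
  assumes indep: "indep_var MX X MY Y" and D: "D \<in> sets (MX \<Otimes>\<^sub>M MY)"
    and slice: "\<And>x. x \<in> space MX \<Longrightarrow> emeasure M {\<omega>\<in>space M. (x, Y \<omega>) \<in> D} \<le> g x"
    and g[measurable]: "g \<in> borel_measurable MX"
  shows "emeasure M {\<omega>\<in>space M. (X \<omega>, Y \<omega>) \<in> D} \<le> (\<integral>\<^sup>+\<omega>. g (X \<omega>) \<partial>M)"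
proof -
  have [measurable]: "X \<in> measurable M MX" "Y \<in> measurable M MY"
    using indep by (auto dest: indep_var_rv1 indep_var_rv2)
  interpret Y: prob_space "distr M MY Y"
    by (rule prob_space_distr) simp
  have "emeasure M {\<omega>\<in>space M. (X \<omega>, Y \<omega>) \<in> D} = emeasure (distr M (MX \<Otimes>\<^sub>M MY) (\<lambda>\<omega>. (X \<omega>, Y \<omega>))) D"
    using D by (subst emeasure_distr) (auto intro!: arg_cong[where f="emeasure M"])
  also have "\<dots> = emeasure (distr M MX X \<Otimes>\<^sub>M distr M MY Y) D"
    using indep by (simp add: indep_var_distribution_eq)
  also have "\<dots> = (\<integral>\<^sup>+x. emeasure (distr M MY Y) (Pair x -` D) \<partial>distr M MX X)"
    using D by (intro Y.emeasure_pair_measure_alt) simp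
  also have "\<dots> \<le> (\<integral>\<^sup>+x. g x \<partial>distr M MX X)"
  proof (rule nn_integral_mono)
    fix x assume "x \<in> space (distr M MX X)"
    moreover have "emeasure (distr M MY Y) (Pair x -` D) = emeasure M {\<omega>\<in>space M. (x, Y \<omega>) \<in> D}"
      using D by (subst emeasure_distr) (auto intro!: arg_cong[where f="emeasure M"])
    ultimately show "emeasure (distr M MY Y) (Pair x -` D) \<le> g x"
      using slice by simp
  qed
  also have "\<dots> = (\<integral>\<^sup>+\<omega>. g (X \<omega>) \<partial>M)"
    by (simp add: nn_integral_distr)
  finally show ?thesis .
qed

lemma (in prob_space) nn_integral_normal_distributed_le:
  fixes h :: "real \<Rightarrow> ennreal"
  assumes X: "distributed M lborel X (normal_density \<mu> \<sigma>)" and [measurable]: "h \<in> borel_measurable borel"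
  shows "(\<integral>\<^sup>+\<omega>. h (X \<omega>) \<partial>M) \<le> ennreal (1 / sqrt (2 * pi * \<sigma>^2)) * (\<integral>\<^sup>+x. h x \<partial>lborel)"
proof -
  have "(\<integral>\<^sup>+\<omega>. h (X \<omega>) \<partial>M) = (\<integral>\<^sup>+x. ennreal (normal_density \<mu> \<sigma> x) * h x \<partial>lborel)"
    by (rule distributed_nn_integral[OF X, symmetric]) simp
  also have "\<dots> \<le> (\<integral>\<^sup>+x. ennreal (1 / sqrt (2 * pi * \<sigma>^2)) * h x \<partial>lborel)"
    unfolding normal_density_def by (intro nn_integral_mono mult_right_mono ennreal_leI) (simp_all add: divide_right_mono)
  also have "\<dots> = ennreal (1 / sqrt (2 * pi * \<sigma>^2)) * (\<integral>\<^sup>+x. h x \<partial>lborel)"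
    by (rule nn_integral_cmult) simp
  finally show ?thesis .
qed

lemma (in prob_space) prob_gaussian_partial_sums_hit_le:
  fixes Z :: "nat \<Rightarrow> 'a \<Rightarrow> real"
  assumes ind: "indep_vars (\<lambda>_. borel) Z {..N}"
    and rv[measurable]: "\<And>i. Z i \<in> borel_measurable M"
    and gauss: "distributed M lborel (Z 0) (normal_density 0 (sqrt a))"
    and sq: "\<And>i. i \<in> {1..N} \<Longrightarrow> integrable M (\<lambda>\<omega>. (Z i \<omega>)^2)"
    and mean: "\<And>i. i \<in> {1..N} \<Longrightarrow> expectation (Z i) = 0"
    and var: "(\<Sum>i=1..N. expectation (\<lambda>\<omega>. (Z i \<omega>)^2)) \<le> r"
    and "0 < a" "0 < r" "0 \<le> c"
  shows "prob {\<omega>\<in>space M. \<exists>k\<le>N. \<bar>\<Sum>i\<le>k. Z i \<omega>\<bar> \<le> c} \<le> (2 * c + 4 * sqrt r) / sqrt (2 * pi * a)"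
proof -
  \<comment> \<open>indep_var needs both variables in the same space, so Z 0 is packaged as a vector on {0}\<close>
  define PZ where "PZ = PiM {0::nat} (\<lambda>_. borel :: real measure)"
  define PN where "PN = PiM {1..N} (\<lambda>_. borel :: real measure)"
  define X0 where "X0 \<omega> = restrict (\<lambda>i. Z i \<omega>) {0}" for \<omega>
  define V where "V \<omega> = restrict (\<lambda>i. Z i \<omega>) {1..N}" for \<omega>
  have [measurable]: "(\<lambda>u. u 0) \<in> borel_measurable PZ" "X0 \<in> measurable M PZ" "V \<in> measurable M PN"
    unfolding PZ_def PN_def X0_def V_def by measurable
  have [measurable]: "(\<lambda>v. \<Sum>i=1..k. v i) \<in> borel_measurable PN" if "k \<le> N" for k
    unfolding PN_def using that
    by (intro borel_measurable_sum[where f="\<lambda>i v. v i"] measurable_component_singleton) auto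
  define D where "D = {p \<in> space (PZ \<Otimes>\<^sub>M PN). \<exists>k\<le>N. \<bar>fst p 0 + (\<Sum>i=1..k. snd p i)\<bar> \<le> c}"
  have "indep_var PZ X0 PN V"
    unfolding PZ_def X0_def PN_def V_def by (rule indep_var_restrict[OF ind]) auto
  moreover have "D \<in> sets (PZ \<Otimes>\<^sub>M PN)"
    unfolding D_def by measurable
  moreover have "emeasure M {\<omega>\<in>space M. (u, V \<omega>) \<in> D} \<le> ennreal (hitting_bound c r (u 0))"
    if "u \<in> space PZ" for u
  proof -
    have "{\<omega>\<in>space M. (u, V \<omega>) \<in> D} = {\<omega>\<in>space M. \<exists>k\<le>N. \<bar>u 0 + (\<Sum>i=1..k. Z i \<omega>)\<bar> \<le> c}"
      using that measurable_space[of V M PN] by (auto simp: D_def V_def space_pair_measure)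
    then show ?thesis
      using prob_shifted_partial_sums_hit_le[OF indep_vars_subset[OF ind] rv sq mean var \<open>0 < r\<close>]
      by (simp add: emeasure_eq_measure ennreal_leI)
  qed
  ultimately have "emeasure M {\<omega>\<in>space M. (X0 \<omega>, V \<omega>) \<in> D} \<le> (\<integral>\<^sup>+\<omega>. hitting_bound c r (X0 \<omega> 0) \<partial>M)"
    by (rule emeasure_indep_pair_le) measurable
  also have "\<dots> \<le> ennreal (1 / sqrt (2 * pi * a)) * (\<integral>\<^sup>+x. hitting_bound c r x \<partial>lborel)"
    using nn_integral_normal_distributed_le[OF gauss, of "\<lambda>x. ennreal (hitting_bound c r x)"] \<open>0 < a\<close>
    by (simp add: X0_def)
  also have "\<dots> = ennreal (1 / sqrt (2 * pi * a)) * ennreal (2 * c + 4 * sqrt r)"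
    by (simp only: nn_integral_hitting_bound[OF \<open>0 \<le> c\<close> \<open>0 < r\<close>])
  also have "\<dots> = ennreal (1 / sqrt (2 * pi * a) * (2 * c + 4 * sqrt r))"
    by (rule ennreal_mult[symmetric]) (use \<open>0 \<le> c\<close> \<open>0 < r\<close> \<open>0 < a\<close> in simp_all)
  also have "{\<omega>\<in>space M. (X0 \<omega>, V \<omega>) \<in> D} = {\<omega>\<in>space M. \<exists>k\<le>N. \<bar>\<Sum>i\<le>k. Z i \<omega>\<bar> \<le> c}"
  proof -
    have "(\<Sum>i\<le>k. Z i \<omega>) = Z 0 \<omega> + (\<Sum>i=1..k. Z i \<omega>)" for k \<omega>
      by (simp add: atMost_atLeast0 sum.atLeast_Suc_atMost)
    then show ?thesis
      using measurable_space[of X0 M PZ] measurable_space[of V M PN]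
      by (auto simp: D_def X0_def V_def space_pair_measure)
  qed
  finally show ?thesis
    using \<open>0 \<le> c\<close> \<open>0 < r\<close> \<open>0 < a\<close> by (simp add: emeasure_eq_measure ennreal_le_iff)
qed

lemma (in prob_space) normal_distributed_second_moment:
  assumes "0 < \<sigma>" and X: "distributed M lborel X (normal_density 0 \<sigma>)"
  shows "integrable M (\<lambda>\<omega>. (X \<omega>)^2)" and "expectation (\<lambda>\<omega>. (X \<omega>)^2) = \<sigma>^2"
proof -
  show "integrable M (\<lambda>\<omega>. (X \<omega>)^2)"
    using distributed_integrable[OF X, of "\<lambda>x. x^2"] integrable_normal_moment[OF \<open>0 < \<sigma>\<close>, where k=2 and \<mu>=0]
    by simp
  show "expectation (\<lambda>\<omega>. (X \<omega>)^2) = \<sigma>^2"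
    using normal_distributed_variance[OF assms] normal_distributed_expectation[OF assms] by simp
qed

lemma standard_brownian_motion_grid_hit_le:
  fixes t :: "nat \<Rightarrow> real"
  assumes bm: "standard_brownian_motion M B"
    and "strict_mono t" and "0 < t 0" and "t N - t 0 \<le> r" and "0 < r" and "0 \<le> c"
  shows "measure M {\<omega>\<in>space M. \<exists>k\<le>N. \<bar>B (t k) \<omega>\<bar> \<le> c} \<le> (2 * c + 4 * sqrt r) / sqrt (2 * pi * t 0)"
proof -
  interpret prob_space M
    using bm by (simp add: standard_brownian_motion_def)
  \<comment> \<open>prepending time 0 makes Z 0 = B (t 0) and Z i the increment over [t (i - 1), t i]\<close>
  define ts where "ts i = (if i = 0 then 0 else t (i - 1))" for i
  define Z where "Z i \<omega> = B (ts (Suc i)) \<omega> - B (ts i) \<omega>" for i \<omega>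
  have "t 0 \<le> t i" for i
    using \<open>strict_mono t\<close> by (simp add: strict_mono_less_eq)
  then have ts_nonneg: "0 \<le> ts i" for i
    using \<open>0 < t 0\<close> by (simp add: ts_def) (meson less_le_trans less_imp_le)
  have ts_mono: "ts i < ts (Suc i)" for i
    using \<open>strict_mono t\<close> \<open>0 < t 0\<close> by (cases i) (auto simp: ts_def strict_mono_def)
  have increment: "distributed M lborel (Z i) (normal_density 0 (sqrt (ts (Suc i) - ts i)))" for i
    using bm ts_nonneg ts_mono unfolding standard_brownian_motion_def Z_def by blast
  have ind: "indep_vars (\<lambda>_. borel) Z {..N}"
    using bm ts_nonneg ts_mono unfolding standard_brownian_motion_def Z_def lessThan_Suc_atMost[symmetric]
    by blast
  have rv: "Z i \<in> borel_measurable M" for i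
    using bm ts_nonneg unfolding standard_brownian_motion_def Z_def by (intro borel_measurable_diff) auto
  have gap: "0 < sqrt (ts (Suc i) - ts i)" for i
    using ts_mono by simp
  have "(\<Sum>i\<le>k. Z i \<omega>) = B (t k) \<omega>" if "\<omega> \<in> space M" for k \<omega>
  proof -
    have "(\<Sum>i\<le>k. Z i \<omega>) = B (ts (Suc k)) \<omega> - B (ts 0) \<omega>"
      unfolding Z_def by (induction k) simp_all
    then show ?thesis
      using bm that by (simp add: standard_brownian_motion_def ts_def)
  qed
  then have "{\<omega>\<in>space M. \<exists>k\<le>N. \<bar>B (t k) \<omega>\<bar> \<le> c} = {\<omega>\<in>space M. \<exists>k\<le>N. \<bar>\<Sum>i\<le>k. Z i \<omega>\<bar> \<le> c}"
    by auto
  also have "prob \<dots> \<le> (2 * c + 4 * sqrt r) / sqrt (2 * pi * t 0)"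
  proof (rule prob_gaussian_partial_sums_hit_le[OF ind rv])
    show "distributed M lborel (Z 0) (normal_density 0 (sqrt (t 0)))"
      using increment[of 0] by (simp add: ts_def)
    show "integrable M (\<lambda>\<omega>. (Z i \<omega>)^2)" "expectation (Z i) = 0" for i
      using normal_distributed_second_moment(1)[OF gap increment]
        normal_distributed_expectation[OF gap increment] by auto
    have "(\<Sum>i=1..N. expectation (\<lambda>\<omega>. (Z i \<omega>)^2)) = (\<Sum>i=1..N. t i - t (i - 1))"
      using normal_distributed_second_moment(2)[OF gap increment] ts_mono
      by (intro sum.cong) (auto simp: ts_def less_imp_le)
    also have "\<dots> = t N - t 0"
      by (induction N) simp_all
    finally show "(\<Sum>i=1..N. expectation (\<lambda>\<omega>. (Z i \<omega>)^2)) \<le> r"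
      using \<open>t N - t 0 \<le> r\<close> by simp
  qed (use \<open>0 < t 0\<close> \<open>0 < r\<close> \<open>0 \<le> c\<close> in auto)
  finally show ?thesis .
qed

lemma continuous_on_dyadic_grid_approx:
  fixes f :: "real \<Rightarrow> real"
  assumes "continuous_on {a..a+r} f" and "0 < r" and "t \<in> {a..a+r}" and "0 < e"
  shows "\<exists>m k. k \<le> (2::nat)^m \<and> \<bar>f (a + real k * r / 2^m) - f t\<bar> < e"
proof -
  obtain \<delta> where "0 < \<delta>" and \<delta>: "\<And>s. s \<in> {a..a+r} \<Longrightarrow> \<bar>s - t\<bar> < \<delta> \<Longrightarrow> \<bar>f s - f t\<bar> < e"
    using assms(1,3,4) unfolding continuous_on_iff dist_real_def by blast
  obtain m :: nat where "r / \<delta> < 2^m"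
    using real_arch_pow[of 2 "r / \<delta>"] by auto
  then have mesh: "r / 2^m < \<delta>"
    using \<open>0 < \<delta>\<close> by (simp add: field_simps)
  define h where "h = r / 2^m"
  define q where "q = (t - a) / h"
  have "0 < h"
    using \<open>0 < r\<close> by (simp add: h_def)
  have "0 \<le> q" "t - a = q * h"
    using assms(3) \<open>0 < h\<close> by (auto simp: q_def)
  have "q \<le> r / h"
    unfolding q_def using assms(3) \<open>0 < h\<close> by (intro divide_right_mono) auto
  then have "q \<le> 2^m"
    using \<open>0 < r\<close> by (simp add: h_def)
  define k where "k = nat \<lfloor>q\<rfloor>"
  have "real k \<le> q" "q < real k + 1"
    using \<open>0 \<le> q\<close> by (auto simp: k_def)
  have "real k \<le> real (2^m)"
    unfolding of_nat_power of_nat_numeral using \<open>real k \<le> q\<close> \<open>q \<le> 2^m\<close> by linarith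
  then have "k \<le> 2^m"
    by (simp only: of_nat_le_iff)
  moreover have "\<bar>f (a + real k * h) - f t\<bar> < e"
  proof (rule \<delta>)
    have "real k * h \<le> q * h" "q * h < real k * h + h"
      using mult_right_mono[OF \<open>real k \<le> q\<close>] mult_strict_right_mono[OF \<open>q < real k + 1\<close> \<open>0 < h\<close>] \<open>0 < h\<close>
      by (simp_all add: distrib_right)
    then show "a + real k * h \<in> {a..a+r}" "\<bar>a + real k * h - t\<bar> < \<delta>"
      using \<open>t - a = q * h\<close> \<open>0 < h\<close> mesh assms(3) by (auto simp: h_def)
  qed
  ultimately show ?thesis
    unfolding h_def by auto
qed

lemma standard_brownian_motion_hit_subset_dyadic:
  fixes \<phi> :: "real \<Rightarrow> real"
  assumes bm: "standard_brownian_motion M B" and "0 < a" and "0 < r" and "0 < e"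
    and \<phi>: "\<And>t. t \<in> {a..<a+r} \<Longrightarrow> \<phi> t \<le> c"
  shows "{\<omega>\<in>space M. \<exists>t\<in>{a..<a+r}. \<bar>B t \<omega>\<bar> \<le> \<phi> t}
    \<subseteq> (\<Union>m. {\<omega>\<in>space M. \<exists>k\<le>(2::nat)^m. \<bar>B (a + real k * r / 2^m) \<omega>\<bar> \<le> c + e})"
proof
  fix \<omega> assume "\<omega> \<in> {\<omega>\<in>space M. \<exists>t\<in>{a..<a+r}. \<bar>B t \<omega>\<bar> \<le> \<phi> t}"
  then obtain t where "\<omega> \<in> space M" "t \<in> {a..<a+r}" "\<bar>B t \<omega>\<bar> \<le> \<phi> t"
    by blast
  have "{a..a+r} \<subseteq> {0..}"
    using \<open>0 < a\<close> by auto
  then have "continuous_on {a..a+r} (\<lambda>t. B t \<omega>)"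
    using bm \<open>\<omega> \<in> space M\<close> unfolding standard_brownian_motion_def
    by (blast intro: continuous_on_subset)
  then obtain m k where "k \<le> 2^m" "\<bar>B (a + real k * r / 2^m) \<omega> - B t \<omega>\<bar> < e"
    using continuous_on_dyadic_grid_approx[of a r "\<lambda>t. B t \<omega>" t e] \<open>0 < r\<close> \<open>0 < e\<close> \<open>t \<in> {a..<a+r}\<close>
    by auto
  moreover have "\<bar>B t \<omega>\<bar> \<le> c"
    using \<phi> \<open>t \<in> {a..<a+r}\<close> \<open>\<bar>B t \<omega>\<bar> \<le> \<phi> t\<close> by force
  ultimately show "\<omega> \<in> (\<Union>m. {\<omega>\<in>space M. \<exists>k\<le>(2::nat)^m. \<bar>B (a + real k * r / 2^m) \<omega>\<bar> \<le> c + e})"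
    using \<open>\<omega> \<in> space M\<close> by force
qed

lemma standard_brownian_motion_dyadic_hit_le:
  assumes bm: "standard_brownian_motion M B" and "0 < a" and "0 < r" and "0 \<le> c"
  shows "measure M (\<Union>m. {\<omega>\<in>space M. \<exists>k\<le>(2::nat)^m. \<bar>B (a + real k * r / 2^m) \<omega>\<bar> \<le> c})
    \<le> (2 * c + 4 * sqrt r) / sqrt (2 * pi * a)"
proof -
  interpret prob_space M
    using bm by (simp add: standard_brownian_motion_def)
  define grid where "grid m k = a + real k * r / 2^m" for m k :: nat
  define G where "G m = {\<omega>\<in>space M. \<exists>k\<le>(2::nat)^m. \<bar>B (grid m k) \<omega>\<bar> \<le> c}" for m
  have [measurable]: "B (grid m k) \<in> borel_measurable M" for m k
    using bm \<open>0 < a\<close> \<open>0 < r\<close> by (simp add: standard_brownian_motion_def grid_def)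
  have G_sets: "G m \<in> events" for m
    unfolding G_def by measurable
  have "prob (G m) \<le> (2 * c + 4 * sqrt r) / sqrt (2 * pi * a)" for m
  proof -
    have "strict_mono (grid m)"
      using \<open>0 < r\<close> by (intro strict_monoI) (simp add: grid_def divide_strict_right_mono)
    then have "prob (G m) \<le> (2 * c + 4 * sqrt r) / sqrt (2 * pi * grid m 0)"
      unfolding G_def using \<open>0 < a\<close> \<open>0 < r\<close> \<open>0 \<le> c\<close>
      by (intro standard_brownian_motion_grid_hit_le[OF bm \<open>strict_mono (grid m)\<close>]) (simp_all add: grid_def)
    then show ?thesis
      by (simp add: grid_def)
  qed
  moreover have "incseq G"
  proof (rule incseq_SucI, rule subsetI)
    fix m \<omega> assume "\<omega> \<in> G m"
    then obtain k where "\<omega> \<in> space M" "k \<le> 2^m" "\<bar>B (grid m k) \<omega>\<bar> \<le> c"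
      by (auto simp: G_def)
    moreover have "grid (Suc m) (2 * k) = grid m k"
      by (simp add: grid_def)
    ultimately show "\<omega> \<in> G (Suc m)"
      unfolding G_def by (intro CollectI conjI exI[of _ "2 * k"]) auto
  qed
  ultimately have "prob (\<Union>m. G m) \<le> (2 * c + 4 * sqrt r) / sqrt (2 * pi * a)"
    using G_sets by (intro LIMSEQ_le_const2[OF finite_Lim_measure_incseq]) auto
  then show ?thesis
    by (simp add: G_def grid_def)
qed

lemma standard_brownian_motion_hit_le:
  fixes \<phi> :: "real \<Rightarrow> real"
  assumes bm: "standard_brownian_motion M B" and "0 < a" and "0 < r" and "0 \<le> c"
    and \<phi>: "\<And>t. t \<in> {a..<a+r} \<Longrightarrow> \<phi> t \<le> c"
  shows "measure M {\<omega>\<in>space M. \<exists>t\<in>{a..<a+r}. \<bar>B t \<omega>\<bar> \<le> \<phi> t} \<le> (2 * c + 4 * sqrt r) / sqrt (2 * pi * a)"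
proof (rule field_le_epsilon)
  interpret prob_space M
    using bm by (simp add: standard_brownian_motion_def)
  fix \<epsilon> :: real assume "0 < \<epsilon>"
  define e where "e = \<epsilon> * sqrt (2 * pi * a) / 2"
  have "0 < e"
    using \<open>0 < \<epsilon>\<close> \<open>0 < a\<close> by (simp add: e_def)
  have [measurable]: "B (a + real k * r / 2^m) \<in> borel_measurable M" for m k
    using bm \<open>0 < a\<close> \<open>0 < r\<close> by (simp add: standard_brownian_motion_def)
  have "prob {\<omega>\<in>space M. \<exists>t\<in>{a..<a+r}. \<bar>B t \<omega>\<bar> \<le> \<phi> t}
      \<le> prob (\<Union>m. {\<omega>\<in>space M. \<exists>k\<le>(2::nat)^m. \<bar>B (a + real k * r / 2^m) \<omega>\<bar> \<le> c + e})"
    by (intro finite_measure_mono standard_brownian_motion_hit_subset_dyadic[OF bm \<open>0 < a\<close> \<open>0 < r\<close> \<open>0 < e\<close> \<phi>])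
      measurable
  also have "\<dots> \<le> (2 * (c + e) + 4 * sqrt r) / sqrt (2 * pi * a)"
    using \<open>0 \<le> c\<close> \<open>0 < e\<close> by (intro standard_brownian_motion_dyadic_hit_le[OF bm \<open>0 < a\<close> \<open>0 < r\<close>]) simp
  also have "\<dots> = (2 * c + 4 * sqrt r) / sqrt (2 * pi * a) + \<epsilon>"
    using \<open>0 < a\<close> by (simp add: e_def field_simps)
  finally show "prob {\<omega>\<in>space M. \<exists>t\<in>{a..<a+r}. \<bar>B t \<omega>\<bar> \<le> \<phi> t} \<le> (2 * c + 4 * sqrt r) / sqrt (2 * pi * a) + \<epsilon>" .
qed

lemma dyadic_hitting_estimate:
  fixes n :: nat and a r \<gamma> :: real
  assumes "1 \<le> n" and "0 < r" and "2 ^ (n - 1) \<le> a"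
  shows "(2 * 2 powr (real n * \<gamma>) + 4 * sqrt r) / sqrt (2 * pi * a)
    \<le> 2 / sqrt pi * 2 powr (real n * (\<gamma> - 1/2)) + 4 / sqrt (2 * pi) * (r / a) powr (1/2)"
proof -
  have "0 < a"
    using assms(3) zero_less_power[of "2::real" "n - 1"] by linarith
  have "2 * pi * 2 ^ (n - 1) = pi * 2 ^ n"
    using \<open>1 \<le> n\<close> by (cases n) auto
  then have "sqrt (2 * pi * 2 ^ (n - 1)) = sqrt pi * sqrt (2 ^ n)"
    by (simp only: real_sqrt_mult)
  also have "sqrt ((2::real) ^ n) = 2 powr (real n / 2)"
    by (simp add: powr_realpow[symmetric] powr_powr flip: powr_half_sqrt)
  finally have scale: "sqrt (2 * pi * 2 ^ (n - 1)) = sqrt pi * 2 powr (real n / 2)" .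
  have "2 * 2 powr (real n * \<gamma>) / sqrt (2 * pi * a) \<le> 2 * 2 powr (real n * \<gamma>) / sqrt (2 * pi * 2 ^ (n - 1))"
    using assms(3) \<open>0 < a\<close> by (intro divide_left_mono mult_pos_pos) auto
  also have "\<dots> = 2 / sqrt pi * 2 powr (real n * (\<gamma> - 1/2))"
    unfolding scale by (simp add: right_diff_distrib powr_diff)
  finally have "2 * 2 powr (real n * \<gamma>) / sqrt (2 * pi * a) \<le> 2 / sqrt pi * 2 powr (real n * (\<gamma> - 1/2))" .
  moreover have "4 * sqrt r / sqrt (2 * pi * a) = 4 / sqrt (2 * pi) * (r / a) powr (1/2)"
    using \<open>0 < a\<close> \<open>0 < r\<close> by (simp add: powr_half_sqrt real_sqrt_mult real_sqrt_divide)
  ultimately show ?thesis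
    by (simp add: add_divide_distrib)
qed

theorem lemma3:
  fixes M :: "'a measure" and B :: "real \<Rightarrow> 'a \<Rightarrow> real"
    and n :: nat and a r \<gamma> :: real
  assumes "standard_brownian_motion M B"
    and "n \<ge> 1" and "a > 0" and "r > 0"
    and "a \<ge> 2 ^ (n - 1)" and "a + r \<le> 2 ^ n"
    and "0 \<le> \<gamma>" and "\<gamma> < 1/2"
  shows "measure M {\<omega> \<in> space M. \<exists>t\<in>{a..<a+r}. \<bar>B t \<omega>\<bar> \<le> t powr \<gamma>}
           \<le> 2 / sqrt pi * 2 powr (real n * (\<gamma> - 1/2)) + 4 / sqrt (2 * pi) * (r / a) powr (1/2)"
proof -
  have "t powr \<gamma> \<le> 2 powr (real n * \<gamma>)" if "t \<in> {a..<a+r}" for t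
  proof -
    have "t powr \<gamma> \<le> (2 ^ n) powr \<gamma>"
      using that assms by (intro powr_mono2) auto
    then show ?thesis
      by (simp add: powr_realpow[symmetric] powr_powr)
  qed
  then have "measure M {\<omega> \<in> space M. \<exists>t\<in>{a..<a+r}. \<bar>B t \<omega>\<bar> \<le> t powr \<gamma>}
      \<le> (2 * 2 powr (real n * \<gamma>) + 4 * sqrt r) / sqrt (2 * pi * a)"
    using assms by (intro standard_brownian_motion_hit_le) auto
  also have "\<dots> \<le> 2 / sqrt pi * 2 powr (real n * (\<gamma> - 1/2)) + 4 / sqrt (2 * pi) * (r / a) powr (1/2)"
    using assms by (intro dyadic_hitting_estimate) auto
  finally show ?thesis .
qed

end
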